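(* For every $n\ge 0$, the number of self-describing sequences in $\mathcal{A}_n$ (equivalently, the number of members of the Catalan family $\mathcal{C}$ of length $n+1$) equals the Catalan number $c_{n+1}$. Moreover, for each $r=0,\dots,n$, the number of self-describing sequences $(a_0,\dots,a_n)\in\mathcal{A}_n$ with last term $a_n=r$ equals $c_r c_{n-r}$.
   Context: $\mathcal{A}_n$ is the set of integer sequences $a=(a_0,\dots,a_n)$ with $0\le a_i\le i$ for all $i$. A sequence is self-describing if $\#\{j: j<i,\ a_j<a_i\}=a_i$ for every index $i$. The Catalan numbers are $c_m=\frac{1}{m+1}\binom{2m}{m}$. The Catalan family $\mathcal{C}$ is defined recursively together with, for each member $a$, a "sibling list" $L(a)$: $(0)\in\mathcal{C}$ with $L((0))=(0)$. If $a=(a_0,\dots,a_n)\in\mathcal{C}$ with $L(a)=(s_0,s_1,\dots,s_m)$ and $a_n=s_i$, then the children of $a$ are $(a_0,\dots,a_n,t)$ for $t\in\{s_0,\dots,s_i,n+1\}$, all in $\mathcal{C}$, each with sibling list $(s_0,\dots,s_i,n+1)$; $\mathcal{C}$ consists exactly of the sequences obtained this way. (Its members are exactly the self-describing sequences.) *)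

theory Defs
  imports Main
begin

definition A_seqs :: "nat \<Rightarrow> nat list set" where
  "A_seqs n = {a. length a = n + 1 \<and> (\<forall>i < length a. a ! i \<le> i)}"

definition self_describing :: "nat list \<Rightarrow> bool" where
  "self_describing a \<longleftrightarrow>
     (\<forall>i < length a. card {j. j < i \<and> a ! j < a ! i} = a ! i)"

definition catalan :: "nat \<Rightarrow> nat" where
  "catalan m = ((2 * m) choose m) div (m + 1)"

end

theory Submission
  imports Defs "HOL-Computational_Algebra.Formal_Power_Series"
begin

text \<open>
  If a self-describing sequence \<open>a\<close> of length \<open>n + 1\<close> ends with \<open>a\<^sub>n = r\<close>, then,
  since \<open>a\<^sub>i \<le> i\<close>, the \<open>r\<close> entries of \<open>a\<close> below \<open>r\<close> are exactly its first \<open>r\<close> entries.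
  Hence \<open>a\<close> is \<open>s\<close>, followed by \<open>t\<close> shifted up by \<open>r\<close>, followed by \<open>r\<close>, where \<open>s\<close> and
  \<open>t\<close> are self-describing of lengths \<open>r\<close> and \<open>n - r\<close>; conversely every such
  concatenation is self-describing. So the number of sequences ending in \<open>r\<close> is a product
  of two smaller counts, and the total count obeys the Catalan recurrence. The closed form
  \<open>c\<^sub>m\<close> obeys it as well: the numbers \<open>(1/2 gchoose k) (-4)\<^sup>k\<close> are the coefficients of
  \<open>sqrt (1 - 4x) = 1 - 2x C(x)\<close>, and Vandermonde's identity says that they convolve to
  the coefficients of \<open>1 - 4x\<close>.
\<close>

lemma all_less_add_Suc_iff:
  fixes r m :: nat
  shows "(\<forall>i < r + m + 1. P i) \<longleftrightarrow> (\<forall>i < r. P i) \<and> (\<forall>k < m. P (r + k)) \<and> P (r + m)"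
proof -
  have "(\<forall>i < r + m + 1. P i) \<longleftrightarrow> (\<forall>i < r. P i) \<and> (\<forall>k \<le> m. P (r + k))"
  proof safe
    fix i assume "\<forall>i < r. P i" "\<forall>k \<le> m. P (r + k)" "i < r + m + 1"
    then show "P i"
      by (cases "i < r") (auto dest!: spec[of _ "i - r"])
  qed auto
  then show ?thesis
    by (auto simp: le_less)
qed

lemma Suc_dvd_central_binomial: "Suc m dvd (2 * m choose m)"
proof -
  have "Suc m * (2 * m choose Suc m) = m * (2 * m choose m)"
    by (metis add_diff_cancel_left' binomial_absorb_comp binomial_absorption mult_2)
  then have "2 * m choose m = Suc m * ((2 * m choose m) - (2 * m choose Suc m))"
    by (simp add: algebra_simps diff_mult_distrib2)
  then show ?thesis
    by (metis dvd_triv_left)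
qed

lemma real_catalan: "real (catalan m) = fact (2 * m) / (fact m * fact (Suc m))"
proof -
  have "real (catalan m) = real (2 * m choose m) / (m + 1)"
    unfolding catalan_def using Suc_dvd_central_binomial[of m] by (simp add: real_of_nat_div)
  then show ?thesis
    by (simp add: binomial_fact mult_2 fact_Suc[of m] field_simps)
qed

lemma gbinomial_half_Suc: "((1/2 :: real) gchoose Suc m) * (-4) ^ Suc m = -2 * catalan m"
proof -
  have "((1/2 :: real) gchoose Suc m) * (-4) ^ Suc m
      = 4 ^ Suc m * pochhammer (-(1/2)) (Suc m) / fact (Suc m)"
    by (simp add: gbinomial_pochhammer flip: power_mult_distrib)
  also have "\<dots> = -2 * (4 ^ m * pochhammer (1/2) m * fact m) / (fact m * fact (Suc m))"
    by (simp add: pochhammer_rec)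
  also have "\<dots> = -2 * catalan m"
    by (simp add: real_catalan fact_double power_mult)
  finally show ?thesis .
qed

lemma catalan_Suc: "catalan (Suc m) = (\<Sum>j\<le>m. catalan j * catalan (m - j))"
proof -
  define g where "g k = ((1/2 :: real) gchoose k) * (-4) ^ k" for k
  have "(\<Sum>k\<le>m + 2. g k * g (m + 2 - k)) = (-4) ^ (m + 2) * ((1/2 + 1/2) gchoose (m + 2))"
    unfolding gbinomial_Vandermonde[symmetric] g_def atLeast0AtMost sum_distrib_left
    by (intro sum.cong refl) (auto simp: power_add[symmetric])
  also have "\<dots> = 0"
    using binomial_gbinomial[of 1 "m + 2", where 'a=real] by simp
  finally have vanish: "(\<Sum>k\<le>m + 2. g k * g (m + 2 - k)) = 0" .
  have g_Suc: "g (Suc k) = -2 * catalan k" for k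
    unfolding g_def by (rule gbinomial_half_Suc)
  have "(\<Sum>k\<le>m + 2. g k * g (m + 2 - k)) = 2 * g (Suc (Suc m)) + (\<Sum>j\<le>m. g (Suc j) * g (Suc (m - j)))"
    unfolding numeral_2_eq_2 add_Suc_right add_0_right
    by (subst sum.atMost_Suc_shift) (simp add: Suc_diff_le g_def)
  also have "\<dots> = -4 * catalan (Suc m) + 4 * (\<Sum>j\<le>m. catalan j * catalan (m - j))"
    by (simp only: g_Suc) (simp add: sum_distrib_left)
  finally have "real (catalan (Suc m)) = (\<Sum>j\<le>m. real (catalan j) * real (catalan (m - j)))"
    using vanish by simp
  then show ?thesis
    unfolding of_nat_mult[symmetric] of_nat_sum[symmetric] of_nat_eq_iff .
qed

definition self_describing_seqs :: "nat \<Rightarrow> nat list set" where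
  "self_describing_seqs m = {a. length a = m \<and> self_describing a}"

lemma self_describing_nth_le:
  assumes "self_describing a" "i < length a"
  shows "a ! i \<le> i"
proof -
  have "a ! i = card {j. j < i \<and> a ! j < a ! i}"
    using assms unfolding self_describing_def by simp
  also have "\<dots> \<le> card {..<i}"
    by (intro card_mono) auto
  finally show ?thesis by simp
qed

lemma self_describing_set_lessThan: "self_describing a \<Longrightarrow> set a \<subseteq> {..<length a}"
  by (auto simp: in_set_conv_nth) (meson le_less_trans self_describing_nth_le)

lemma finite_self_describing_seqs: "finite (self_describing_seqs m)"
proof (rule finite_subset)
  show "self_describing_seqs m \<subseteq> {a. set a \<subseteq> {..<m} \<and> length a = m}"
    unfolding self_describing_seqs_def using self_describing_set_lessThan by auto
  show "finite {a. set a \<subseteq> {..<m} \<and> length a = m}"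
    by (rule finite_lists_length_eq) simp
qed

lemma self_describing_seqs_0: "self_describing_seqs 0 = {[]}"
  unfolding self_describing_seqs_def self_describing_def by auto

definition glue :: "nat list \<Rightarrow> nat list \<Rightarrow> nat list" where
  "glue s t = s @ map (\<lambda>x. length s + x) t @ [length s]"

lemma length_glue [simp]: "length (glue s t) = length s + length t + 1"
  by (simp add: glue_def)

lemma nth_glue_left: "i < length s \<Longrightarrow> glue s t ! i = s ! i"
  by (simp add: glue_def nth_append)

lemma nth_glue_middle: "k < length t \<Longrightarrow> glue s t ! (length s + k) = length s + t ! k"
  by (simp add: glue_def nth_append)

lemma nth_glue_last: "glue s t ! (length s + length t) = length s"
  by (simp add: glue_def nth_append)

lemma glue_smaller_before_left:
  "i < length s \<Longrightarrow> {j. j < i \<and> glue s t ! j < glue s t ! i} = {j. j < i \<and> s ! j < s ! i}"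
  by (auto simp: nth_glue_left)

lemma glue_smaller_before_middle:
  assumes "set s \<subseteq> {..<length s}" "k < length t"
  shows "{j. j < length s + k \<and> glue s t ! j < glue s t ! (length s + k)}
       = {..<length s} \<union> (\<lambda>j. length s + j) ` {j. j < k \<and> t ! j < t ! k}"
proof -
  have "s ! j < length s + t ! k" if "j < length s" for j
    using assms(1) nth_mem[OF that] by fastforce
  moreover have "j \<in> (\<lambda>j. length s + j) ` {j. j < k \<and> t ! j < t ! k}"
    if "length s \<le> j" "j < length s + k" "t ! (j - length s) < t ! k" for j
    using that by (auto simp: image_iff intro!: exI[of _ "j - length s"])
  ultimately show ?thesis
    using assms(2) by (auto simp: glue_def nth_append) (meson not_less)+
qed

lemma glue_smaller_before_last:
  assumes "set s \<subseteq> {..<length s}"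
  shows "{j. j < length s + length t \<and> glue s t ! j < glue s t ! (length s + length t)} = {..<length s}"
  using assms by (auto simp: glue_def nth_append dest: nth_mem)

lemma self_describing_glue_iff:
  "self_describing (glue s t) \<longleftrightarrow> self_describing s \<and> self_describing t"
proof -
  let ?g = "glue s t" and ?r = "length s"
  let ?P = "\<lambda>i. card {j. j < i \<and> ?g ! j < ?g ! i} = ?g ! i"
  have left: "(\<forall>i < ?r. ?P i) \<longleftrightarrow> self_describing s"
    unfolding self_describing_def by (simp add: glue_smaller_before_left) (simp add: nth_glue_left)
  show ?thesis
  proof (cases "self_describing s")
    case False
    then show ?thesis
      using left unfolding self_describing_def[of ?g] length_glue all_less_add_Suc_iff by blast
  next
    case True
    then have s_bound: "set s \<subseteq> {..<length s}"
      by (rule self_describing_set_lessThan)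
    have "?P (?r + k) \<longleftrightarrow> card {j. j < k \<and> t ! j < t ! k} = t ! k" if "k < length t" for k
    proof -
      have "card {j. j < ?r + k \<and> ?g ! j < ?g ! (?r + k)} = ?r + card {j. j < k \<and> t ! j < t ! k}"
        unfolding glue_smaller_before_middle[OF s_bound that]
        by (subst card_Un_disjoint) (auto simp: card_image)
      then show ?thesis
        by (simp add: nth_glue_middle that)
    qed
    then have middle: "(\<forall>k < length t. ?P (?r + k)) \<longleftrightarrow> self_describing t"
      unfolding self_describing_def by simp
    have last: "?P (?r + length t)"
      unfolding glue_smaller_before_last[OF s_bound] by (simp add: nth_glue_last)
    show ?thesis
      unfolding self_describing_def[of ?g] length_glue all_less_add_Suc_iff
      using left middle last True by blast
  qed
qed

lemma glue_inject:
  assumes "length s = length s'"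
  shows "glue s t = glue s' t' \<longleftrightarrow> s = s' \<and> t = t'"
proof -
  have "inj (\<lambda>x::nat. length s + x)"
    by (simp add: inj_on_def)
  then show ?thesis
    using assms by (auto simp: glue_def dest: inj_map_eq_map)
qed

lemma self_describing_smaller_before_last:
  assumes "self_describing a" "length a = Suc n"
  shows "{j. j < n \<and> a ! j < a ! n} = {..<a ! n}"
proof -
  have "a ! n \<le> n"
    using assms self_describing_nth_le by simp
  then have "j < n \<and> a ! j < a ! n" if "j < a ! n" for j
    using assms self_describing_nth_le[of a j] that by simp
  then have "{..<a ! n} \<subseteq> {j. j < n \<and> a ! j < a ! n}"
    by auto
  moreover have "card {j. j < n \<and> a ! j < a ! n} = card {..<a ! n}"
    using assms unfolding self_describing_def by simp
  ultimately show ?thesis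
    by (intro card_subset_eq[symmetric]) auto
qed

lemma self_describing_obtain_glue:
  assumes "self_describing a" "length a = Suc n"
  obtains s t where "a = glue s t" "length s = a ! n"
proof -
  let ?r = "a ! n"
  define u where "u = drop ?r (take n a)"
  have "?r \<le> n"
    using assms self_describing_nth_le by simp
  have "take n a @ [?r] = a"
    using take_Suc_conv_app_nth[of n a] assms(2) by simp
  moreover have "take ?r a @ u = take n a"
    using append_take_drop_id[of ?r "take n a"] \<open>?r \<le> n\<close> by (simp add: u_def min_def)
  ultimately have a: "take ?r a @ u @ [?r] = a"
    by (metis append_assoc)
  have "?r \<le> x" if "x \<in> set u" for x
  proof -
    obtain k where "k < length u" "x = a ! (?r + k)"
      using \<open>x \<in> set u\<close> \<open>?r \<le> n\<close> by (auto simp: u_def in_set_conv_nth)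
    moreover have "?r + k < n"
      using \<open>k < length u\<close> assms(2) by (simp add: u_def)
    moreover have "?r + k \<notin> {j. j < n \<and> a ! j < a ! n}"
      unfolding self_describing_smaller_before_last[OF assms] by simp
    ultimately show ?thesis
      by simp
  qed
  then have "map (\<lambda>x. ?r + (x - ?r)) u = u"
    by (simp add: map_idI)
  then have "glue (take ?r a) (map (\<lambda>x. x - ?r) u) = a"
    using a \<open>?r \<le> n\<close> assms(2) by (simp add: glue_def min_def comp_def)
  moreover have "length (take ?r a) = ?r"
    using \<open>?r \<le> n\<close> assms(2) by simp
  ultimately show ?thesis
    using that by metis
qed

lemma self_describing_seqs_last:
  assumes "r \<le> n"
  shows "{a \<in> self_describing_seqs (Suc n). a ! n = r}
       = (\<lambda>(s, t). glue s t) ` (self_describing_seqs r \<times> self_describing_seqs (n - r))"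
proof (intro equalityI subsetI)
  fix a assume "a \<in> {a \<in> self_describing_seqs (Suc n). a ! n = r}"
  then have a: "self_describing a" "length a = Suc n" "a ! n = r"
    by (auto simp: self_describing_seqs_def)
  then obtain s t where "a = glue s t" "length s = r"
    by (metis self_describing_obtain_glue)
  moreover from this have "length t = n - r"
    using a(2) by simp
  ultimately show "a \<in> (\<lambda>(s, t). glue s t) ` (self_describing_seqs r \<times> self_describing_seqs (n - r))"
    using a(1) by (auto simp: self_describing_seqs_def self_describing_glue_iff)
next
  fix a assume "a \<in> (\<lambda>(s, t). glue s t) ` (self_describing_seqs r \<times> self_describing_seqs (n - r))"
  then obtain s t where "a = glue s t" "s \<in> self_describing_seqs r" "t \<in> self_describing_seqs (n - r)"
    by auto
  then show "a \<in> {a \<in> self_describing_seqs (Suc n). a ! n = r}"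
    using assms nth_glue_last[of s t]
    by (auto simp: self_describing_seqs_def self_describing_glue_iff)
qed

lemma card_self_describing_seqs_last:
  assumes "r \<le> n"
  shows "card {a \<in> self_describing_seqs (Suc n). a ! n = r}
       = card (self_describing_seqs r) * card (self_describing_seqs (n - r))"
proof -
  have "inj_on (\<lambda>(s, t). glue s t) (self_describing_seqs r \<times> self_describing_seqs (n - r))"
  proof (rule inj_onI, clarify)
    fix s t s' t'
    assume "s \<in> self_describing_seqs r" "s' \<in> self_describing_seqs r" "glue s t = glue s' t'"
    then show "s = s' \<and> t = t'"
      using glue_inject[of s s' t t'] by (simp add: self_describing_seqs_def)
  qed
  then show ?thesis
    unfolding self_describing_seqs_last[OF assms]
    by (simp add: card_image card_cartesian_product)
qed

lemma card_self_describing_seqs_Suc: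
  "card (self_describing_seqs (Suc n))
     = (\<Sum>r\<le>n. card (self_describing_seqs r) * card (self_describing_seqs (n - r)))"
proof -
  have "self_describing_seqs (Suc n) = (\<Union>r\<le>n. {a \<in> self_describing_seqs (Suc n). a ! n = r})"
    using self_describing_nth_le by (auto simp: self_describing_seqs_def)
  then have "card (self_describing_seqs (Suc n))
      = card (\<Union>r\<le>n. {a \<in> self_describing_seqs (Suc n). a ! n = r})"
    by (rule arg_cong)
  also have "\<dots> = (\<Sum>r\<le>n. card {a \<in> self_describing_seqs (Suc n). a ! n = r})"
    by (rule card_UN_disjoint) (auto simp: finite_self_describing_seqs)
  also have "\<dots> = (\<Sum>r\<le>n. card (self_describing_seqs r) * card (self_describing_seqs (n - r)))"
    by (simp add: card_self_describing_seqs_last)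
  finally show ?thesis .
qed

lemma card_self_describing_seqs: "card (self_describing_seqs m) = catalan m"
proof (induction m rule: less_induct)
  case (less m)
  show ?case
  proof (cases m)
    case 0
    then show ?thesis
      by (simp add: self_describing_seqs_0 catalan_def)
  next
    case (Suc n)
    then show ?thesis
      using less.IH by (simp add: card_self_describing_seqs_Suc catalan_Suc)
  qed
qed

lemma A_seqs_self_describing: "{a \<in> A_seqs n. self_describing a} = self_describing_seqs (Suc n)"
  using self_describing_nth_le by (auto simp: A_seqs_def self_describing_seqs_def)

theorem theorem3:
  fixes n :: nat
  shows "card {a \<in> A_seqs n. self_describing a} = catalan (n + 1) \<and>
         (\<forall>r \<le> n. card {a \<in> A_seqs n. self_describing a \<and> a ! n = r}
                    = catalan r * catalan (n - r))"
proof (intro conjI allI impI)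
  show "card {a \<in> A_seqs n. self_describing a} = catalan (n + 1)"
    by (simp add: A_seqs_self_describing card_self_describing_seqs)
  fix r assume "r \<le> n"
  have "{a \<in> A_seqs n. self_describing a \<and> a ! n = r} = {a \<in> self_describing_seqs (Suc n). a ! n = r}"
    using A_seqs_self_describing[of n] by blast
  then show "card {a \<in> A_seqs n. self_describing a \<and> a ! n = r} = catalan r * catalan (n - r)"
    using \<open>r \<le> n\<close> by (simp add: card_self_describing_seqs_last card_self_describing_seqs)
qed

end
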